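(* If the transition dynamics are deterministic, the policy that maximizes expected return is the policy that minimizes the time-step metric, i.e. $\pi^* = \pi^{\min}$, where $\pi^{\min}$ denotes the policy attaining the minimum time-step distance $d^{\min}_T(s, s_g)$ to the goal.
   Context: Consider a goal-conditioned MDP $\langle \mathcal{S}, \mathcal{A}, \mathcal{G}, P, \rho_0, \sigma, \gamma \rangle$ with discrete state space $\mathcal{S}$, discrete action space $\mathcal{A}$, goal set $\mathcal{G} \subseteq \mathcal{S}$, goal-conditioned transition dynamics $P(\cdot|s,a,s_g)$, start distribution $\rho_0$, goal distribution $\sigma$, and discount $\gamma \in [0,1)$. The reward is $r(s_t,a_t,s_{t+1}|s_g) = \mathbb{I}[s_{t+1}=s_g]$, and on reaching the goal the agent transitions to an absorbing state with zero reward thereafter (the episode terminates). Policies are $\pi(\cdot|s,s_g)$, and $\pi^*$ maximizes expected discounted return $\mathbb{E}[\sum_t \gamma^t r(s_t,a_t,s_{t+1}|s_g)]$. The time-step metric is $d^\pi_T(s, s_g) = \mathbb{E}[T(s_g|\pi, s)]$, where $T(s_g|\pi,s)$ is the random first time-step at which $s_g$ is reached starting from $s$ under $\pi$. The minimum time-step distance $d^{\min}_T$ satisfies the Bellman optimality condition $d^{\min}_T(s,s_g)=0$ if $s=s_g$ and $d^{\min}_T(s,s_g) = 1 + \min_{a} \sum_{s'} P(s'|s,a,s_g)\, d^{\min}_T(s',s_g)$ otherwise; $\pi^{\min}$ is the corresponding policy. The value under this reward is $V^\pi(s|s_g) = \mathbb{E}[\gamma^{T(s_g|\pi,s)}]$.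 *)

theory Defs
  imports "HOL-Probability.Probability"
begin

text \<open>Transition dynamics: P s a g is the distribution of the next state given
  state s, action a and goal g.  A policy pol s g is a distribution over actions.\<close>

type_synonym ('s,'a) dynamics = "'s \<Rightarrow> 'a \<Rightarrow> 's \<Rightarrow> 's pmf"
type_synonym ('s,'a) policy = "'s \<Rightarrow> 's \<Rightarrow> 'a pmf"

definition deterministic_dynamics :: "('s,'a) dynamics \<Rightarrow> bool" where
  "deterministic_dynamics P \<longleftrightarrow> (\<forall>s a g. \<exists>s'. P s a g = return_pmf s')"

text \<open>hit_prob P pol g n s = Pr[T(g | pol, s) = n]: probability that the first time-step
  at which goal g is reached, starting from s under pol, equals n.  Reaching the goal
  terminates the episode (absorbing state).\<close>
fun hit_prob :: "('s,'a) dynamics \<Rightarrow> ('s,'a) policy \<Rightarrow> 's \<Rightarrow> nat \<Rightarrow> 's \<Rightarrow> ennreal" where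
  "hit_prob P pol g 0 s = (if s = g then 1 else 0)"
| "hit_prob P pol g (Suc n) s =
     (if s = g then 0
      else \<integral>\<^sup>+ a. (\<integral>\<^sup>+ s'. hit_prob P pol g n s' \<partial>measure_pmf (P s a g)) \<partial>measure_pmf (pol s g))"

text \<open>Value V^pol(s | g) = E[gamma ^ T], with gamma^infinity = 0.\<close>
definition value_fn :: "('s,'a) dynamics \<Rightarrow> real \<Rightarrow> ('s,'a) policy \<Rightarrow> 's \<Rightarrow> 's \<Rightarrow> ennreal" where
  "value_fn P \<gamma> pol s g = (\<Sum>n. ennreal (\<gamma> ^ n) * hit_prob P pol g n s)"

text \<open>Time-step metric d_T^pol(s, g) = E[T(g | pol, s)], where T = infinity
  (never reaching the goal) contributes infinity with its probability.\<close>
definition time_step_metric :: "('s,'a) dynamics \<Rightarrow> ('s,'a) policy \<Rightarrow> 's \<Rightarrow> 's \<Rightarrow> ennreal" where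
  "time_step_metric P pol s g =
     (\<Sum>n. of_nat n * hit_prob P pol g n s) + \<infinity> * (1 - (\<Sum>n. hit_prob P pol g n s))"

definition d_min :: "('s,'a) dynamics \<Rightarrow> 's \<Rightarrow> 's \<Rightarrow> ennreal" where
  "d_min P s g = (INF pol. time_step_metric P pol s g)"

definition optimal_policy :: "('s,'a) dynamics \<Rightarrow> real \<Rightarrow> 's set \<Rightarrow> ('s,'a) policy \<Rightarrow> bool" where
  "optimal_policy P \<gamma> G pol \<longleftrightarrow>
     (\<forall>pol'. \<forall>s. \<forall>g\<in>G. value_fn P \<gamma> pol' s g \<le> value_fn P \<gamma> pol s g)"

definition min_time_policy :: "('s,'a) dynamics \<Rightarrow> 's set \<Rightarrow> ('s,'a) policy \<Rightarrow> bool" where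
  "min_time_policy P G pol \<longleftrightarrow> (\<forall>s. \<forall>g\<in>G. time_step_metric P pol s g = d_min P s g)"

end

theory Submission
  imports Defs
begin

text \<open>With deterministic dynamics, a policy started in s can hit the goal only at times
  t \<ge> d(s), the length of a shortest action path from s to the goal, and the distribution
  of the hitting time T has total mass at most 1.  Hence E[\<gamma>^T] \<le> \<gamma>^d(s) and
  E[T] \<ge> d(s), and each bound is attained exactly when T = d(s) almost surely, which the
  greedy shortest-path policy achieves.  So maximising the value and minimising the
  time-step metric both mean T = d(s) almost surely; from states that cannot reach the goal
  every policy has value 0 and time-step metric \<infinity>.\<close>

lemma zero_off_point_if_point_mass_one:
  fixes h :: "nat \<Rightarrow> ennreal"
  assumes "suminf h \<le> 1" and "h d = 1" and "n \<noteq> d"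
  shows "h n = 0"
proof -
  have "1 + h n = sum h {d, n}" using assms(2,3) by simp
  also have "\<dots> \<le> suminf h" by (rule sum_le_suminf) auto
  also have "\<dots> \<le> 1 + 0" using assms(1) by simp
  finally show ?thesis by (simp add: ennreal_add_left_cancel_le)
qed

lemma zero_off_point_if_weighted_excess_zero:
  fixes h c :: "nat \<Rightarrow> ennreal"
  assumes "(\<Sum>n. c n * h n) = 0" and "\<And>n. d < n \<Longrightarrow> c n \<noteq> 0"
    and "\<And>n. n < d \<Longrightarrow> h n = 0"
    and "n \<noteq> d"
  shows "h n = 0"
  using assms suminf_eq_zero_iff[of "\<lambda>n. c n * h n"]
  by (metis linorder_neqE_nat mult_eq_0_iff summableI zero_le)

lemma discounted_sum_split:
  fixes h :: "nat \<Rightarrow> ennreal" and \<gamma> :: real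
  assumes "\<And>n. n < d \<Longrightarrow> h n = 0" and "0 \<le> \<gamma>" and "\<gamma> \<le> 1"
  shows "ennreal (\<gamma> ^ d) * suminf h
    = (\<Sum>n. ennreal (\<gamma> ^ n) * h n) + (\<Sum>n. ennreal (\<gamma> ^ d - \<gamma> ^ n) * h n)"
proof -
  have "ennreal (\<gamma> ^ d) * h n = ennreal (\<gamma> ^ n) * h n + ennreal (\<gamma> ^ d - \<gamma> ^ n) * h n" for n
  proof (cases "n < d")
    case False
    then have "\<gamma> ^ n \<le> \<gamma> ^ d" using assms(2,3) by (intro power_decreasing) auto
    then show ?thesis using assms(2) by (simp flip: distrib_right ennreal_plus)
  qed (simp add: assms(1))
  then have "(\<Sum>n. ennreal (\<gamma> ^ d) * h n)
    = (\<Sum>n. ennreal (\<gamma> ^ n) * h n + ennreal (\<gamma> ^ d - \<gamma> ^ n) * h n)" by simp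
  also have "\<dots> = (\<Sum>n. ennreal (\<gamma> ^ n) * h n) + (\<Sum>n. ennreal (\<gamma> ^ d - \<gamma> ^ n) * h n)"
    by (rule suminf_add[symmetric]) auto
  finally show ?thesis by simp
qed

lemma expected_time_split:
  fixes h :: "nat \<Rightarrow> ennreal"
  assumes "\<And>n. n < d \<Longrightarrow> h n = 0"
  shows "(\<Sum>n. of_nat n * h n) = of_nat d * suminf h + (\<Sum>n. of_nat (n - d) * h n)"
proof -
  have "of_nat n * h n = of_nat d * h n + of_nat (n - d) * h n" for n
    using assms[of n] by (cases "n < d") (simp_all flip: distrib_right of_nat_add)
  then have "(\<Sum>n. of_nat n * h n) = (\<Sum>n. of_nat d * h n + of_nat (n - d) * h n)" by simp
  also have "\<dots> = (\<Sum>n. of_nat d * h n) + (\<Sum>n. of_nat (n - d) * h n)"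
    by (rule suminf_add[symmetric]) auto
  finally show ?thesis by simp
qed

lemma discounted_sum_le_power:
  fixes h :: "nat \<Rightarrow> ennreal" and \<gamma> :: real
  assumes "\<And>n. n < d \<Longrightarrow> h n = 0" and "suminf h \<le> 1" and "0 \<le> \<gamma>" and "\<gamma> \<le> 1"
  shows "(\<Sum>n. ennreal (\<gamma> ^ n) * h n) \<le> ennreal (\<gamma> ^ d)"
proof -
  have "(\<Sum>n. ennreal (\<gamma> ^ n) * h n)
      \<le> (\<Sum>n. ennreal (\<gamma> ^ n) * h n) + (\<Sum>n. ennreal (\<gamma> ^ d - \<gamma> ^ n) * h n)"
    by simp
  also have "\<dots> = ennreal (\<gamma> ^ d) * suminf h"
    by (rule discounted_sum_split[OF assms(1,3,4), symmetric])
  also have "\<dots> \<le> ennreal (\<gamma> ^ d)"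
    using mult_left_mono[OF assms(2)] by simp
  finally show ?thesis .
qed

lemma discounted_sum_eq_power_iff:
  fixes h :: "nat \<Rightarrow> ennreal" and \<gamma> :: real
  assumes zero_below: "\<And>n. n < d \<Longrightarrow> h n = 0" and mass: "suminf h \<le> 1"
    and "0 < \<gamma>" and "\<gamma> < 1"
  shows "(\<Sum>n. ennreal (\<gamma> ^ n) * h n) = ennreal (\<gamma> ^ d) \<longleftrightarrow> h d = 1"
proof -
  have discounted_point: "(\<Sum>n. ennreal (\<gamma> ^ n) * h n) = ennreal (\<gamma> ^ d) * h d"
    if "\<And>n. n \<noteq> d \<Longrightarrow> h n = 0"
    using suminf_finite[of "{d}" "\<lambda>n. ennreal (\<gamma> ^ n) * h n"] that by simp
  let ?V = "\<Sum>n. ennreal (\<gamma> ^ n) * h n"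
  let ?R = "\<Sum>n. ennreal (\<gamma> ^ d - \<gamma> ^ n) * h n"
  show ?thesis
  proof
    assume V: "?V = ennreal (\<gamma> ^ d)"
    have "?V + ?R = ennreal (\<gamma> ^ d) * suminf h"
      using discounted_sum_split[OF zero_below] assms(3,4) by simp
    also have "\<dots> \<le> ?V + 0"
      using mult_left_mono[OF mass] V by simp
    finally have "?R = 0"
      using V by (simp add: ennreal_add_left_cancel_le)
    moreover have "ennreal (\<gamma> ^ d - \<gamma> ^ n) \<noteq> 0" if "d < n" for n
      using power_strict_decreasing[OF that assms(3,4)] by simp
    ultimately have "n \<noteq> d \<Longrightarrow> h n = 0" for n
      by (rule zero_off_point_if_weighted_excess_zero[OF _ _ zero_below])
    then have "ennreal (\<gamma> ^ d) * h d = ennreal (\<gamma> ^ d) * 1"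
      using discounted_point V by simp
    then show "h d = 1"
      using zero_less_power[OF assms(3), of d] ennreal_mult_cancel_left[of "ennreal (\<gamma> ^ d)" "h d" 1]
      by (simp add: ennreal_eq_0_iff)
  next
    assume "h d = 1"
    then show "?V = ennreal (\<gamma> ^ d)"
      using discounted_point zero_off_point_if_point_mass_one[OF mass] by simp
  qed
qed

lemma top_mult_one_minus:
  fixes x :: ennreal
  assumes "x \<le> 1"
  shows "\<infinity> * (1 - x) = (if x = 1 then 0 else \<infinity>)"
  using assms by (auto simp: ennreal_top_mult diff_eq_0_iff_ennreal)

lemma expected_time_ge:
  fixes h :: "nat \<Rightarrow> ennreal"
  assumes "\<And>n. n < d \<Longrightarrow> h n = 0" and "suminf h \<le> 1"
  shows "of_nat d \<le> (\<Sum>n. of_nat n * h n) + \<infinity> * (1 - suminf h)"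
proof (cases "suminf h = 1")
  case True
  then show ?thesis by (simp add: expected_time_split[OF assms(1)])
next
  case False
  then show ?thesis using top_mult_one_minus[OF assms(2)] by simp
qed

lemma expected_time_eq_iff:
  fixes h :: "nat \<Rightarrow> ennreal"
  assumes zero_below: "\<And>n. n < d \<Longrightarrow> h n = 0" and mass: "suminf h \<le> 1"
  shows "(\<Sum>n. of_nat n * h n) + \<infinity> * (1 - suminf h) = of_nat d \<longleftrightarrow> h d = 1"
proof
  assume T: "(\<Sum>n. of_nat n * h n) + \<infinity> * (1 - suminf h) = of_nat d"
  then have mass_one: "suminf h = 1"
    using top_mult_one_minus[OF mass] by (auto split: if_splits)
  then have "of_nat d + (\<Sum>n. of_nat (n - d) * h n) = of_nat d + (0::ennreal)"
    using T by (simp add: expected_time_split[OF zero_below])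
  then have "(\<Sum>n. of_nat (n - d) * h n) = (0::ennreal)"
    by (simp add: ennreal_add_left_cancel)
  then have "n \<noteq> d \<Longrightarrow> h n = 0" for n
    by (rule zero_off_point_if_weighted_excess_zero[OF _ _ zero_below]) auto
  then show "h d = 1"
    using mass_one suminf_finite[of "{d}" h] by simp
next
  assume "h d = 1"
  then have "n \<noteq> d \<Longrightarrow> h n = 0" for n
    using zero_off_point_if_point_mass_one[OF mass] by blast
  then show "(\<Sum>n. of_nat n * h n) + \<infinity> * (1 - suminf h) = of_nat d"
    using \<open>h d = 1\<close> suminf_finite[of "{d}" h] suminf_finite[of "{d}" "\<lambda>n. of_nat n * h n"] by simp
qed

lemma hit_prob_partial_sum_le_1: "(\<Sum>n<N. hit_prob P pol g n s) \<le> 1"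
proof (induction N arbitrary: s)
  case (Suc N)
  have shift: "(\<Sum>n<Suc N. hit_prob P pol g n s)
      = hit_prob P pol g 0 s + (\<Sum>n<N. hit_prob P pol g (Suc n) s)"
    by (rule sum.lessThan_Suc_shift)
  show ?case
  proof (cases "s = g")
    case False
    have "(\<Sum>n<N. hit_prob P pol g (Suc n) s)
        = \<integral>\<^sup>+ a. \<integral>\<^sup>+ s'. (\<Sum>n<N. hit_prob P pol g n s') \<partial>P s a g \<partial>pol s g"
      using False by (simp add: nn_integral_sum)
    also have "\<dots> \<le> \<integral>\<^sup>+ a. \<integral>\<^sup>+ s'. 1 \<partial>P s a g \<partial>pol s g"
      by (intro nn_integral_mono Suc.IH)
    finally show ?thesis
      unfolding shift using False by simp
  qed (unfold shift, simp)
qed simp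

lemma hit_prob_sum_le_1: "(\<Sum>n. hit_prob P pol g n s) \<le> 1"
  by (rule suminf_le_const) (auto intro: hit_prob_partial_sum_le_1)

definition next_state :: "('s,'a) dynamics \<Rightarrow> 's \<Rightarrow> 's \<Rightarrow> 'a \<Rightarrow> 's" where
  "next_state P g s a = (SOME s'. P s a g = return_pmf s')"

lemma dynamics_eq_return_next_state:
  "deterministic_dynamics P \<Longrightarrow> P s a g = return_pmf (next_state P g s a)"
  unfolding next_state_def deterministic_dynamics_def by (rule someI_ex) blast

lemma hit_prob_Suc_deterministic:
  assumes "deterministic_dynamics P"
  shows "hit_prob P pol g (Suc n) s =
    (if s = g then 0 else \<integral>\<^sup>+ a. hit_prob P pol g n (next_state P g s a) \<partial>pol s g)"
  by (simp add: dynamics_eq_return_next_state[OF assms] nn_integral_return_pmf)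

fun reach_within :: "('s,'a) dynamics \<Rightarrow> 's \<Rightarrow> nat \<Rightarrow> 's set" where
  "reach_within P g 0 = {g}"
| "reach_within P g (Suc n) = insert g {s. \<exists>a. next_state P g s a \<in> reach_within P g n}"

lemma goal_in_reach_within: "g \<in> reach_within P g n"
  by (cases n) auto

lemma hit_prob_nonzero_imp_reach_within:
  assumes "deterministic_dynamics P" and "hit_prob P pol g n s \<noteq> 0"
  shows "s \<in> reach_within P g n"
  using assms(2)
proof (induction n arbitrary: s)
  case (Suc n)
  show ?case
  proof (cases "s = g")
    case False
    have "\<exists>a. hit_prob P pol g n (next_state P g s a) \<noteq> 0"
    proof (rule ccontr)
      assume "\<not> ?thesis"
      then have "hit_prob P pol g (Suc n) s = 0"
        using False by (simp del: hit_prob.simps add: hit_prob_Suc_deterministic[OF assms(1)])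
      then show False
        using Suc.prems by contradiction
    qed
    then show ?thesis
      using Suc.IH by auto
  qed (simp add: goal_in_reach_within)
qed (auto split: if_splits)

definition goal_dist :: "('s,'a) dynamics \<Rightarrow> 's \<Rightarrow> 's \<Rightarrow> nat" where
  "goal_dist P g s = (LEAST n. s \<in> reach_within P g n)"

lemma reach_within_goal_dist:
  "s \<in> reach_within P g n \<Longrightarrow> s \<in> reach_within P g (goal_dist P g s)"
  unfolding goal_dist_def by (rule LeastI)

lemma not_reach_within_below_goal_dist:
  "n < goal_dist P g s \<Longrightarrow> s \<notin> reach_within P g n"
  unfolding goal_dist_def by (rule not_less_Least)

lemma hit_prob_below_goal_dist:
  assumes "deterministic_dynamics P" and "n < goal_dist P g s"
  shows "hit_prob P pol g n s = 0"
  using hit_prob_nonzero_imp_reach_within[OF assms(1)] not_reach_within_below_goal_dist[OF assms(2)]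
  by blast

lemma goal_dist_Suc_step:
  assumes "s \<in> reach_within P g n" and "goal_dist P g s = Suc k"
  shows "s \<noteq> g" and "\<exists>a. next_state P g s a \<in> reach_within P g k"
proof -
  have "s \<notin> reach_within P g k"
    using assms(2) by (simp add: not_reach_within_below_goal_dist)
  then show "s \<noteq> g"
    using goal_in_reach_within by metis
  show "\<exists>a. next_state P g s a \<in> reach_within P g k"
    using reach_within_goal_dist[OF assms(1)] assms(2) \<open>s \<notin> reach_within P g k\<close> \<open>s \<noteq> g\<close>
    by auto
qed

lemma goal_dist_next_state:
  assumes "goal_dist P g s = Suc k" and "next_state P g s a \<in> reach_within P g k"
  shows "goal_dist P g (next_state P g s a) = k"
proof (rule antisym)
  let ?s' = "next_state P g s a"
  show "goal_dist P g ?s' \<le> k"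
    using assms(2) unfolding goal_dist_def by (rule Least_le)
  have "s \<in> reach_within P g (Suc (goal_dist P g ?s'))"
    using reach_within_goal_dist[OF assms(2)] by auto
  then have "\<not> Suc (goal_dist P g ?s') < goal_dist P g s"
    using not_reach_within_below_goal_dist by metis
  then show "k \<le> goal_dist P g ?s'"
    using assms(1) by simp
qed

definition greedy_policy :: "('s,'a) dynamics \<Rightarrow> ('s,'a) policy" where
  \<comment> \<open>at the goal the distance is 0 and the (arbitrary) action never matters\<close>
  "greedy_policy P s g =
     return_pmf (SOME a. next_state P g s a \<in> reach_within P g (goal_dist P g s - 1))"

lemma hit_prob_greedy_policy:
  assumes "deterministic_dynamics P" and "s \<in> reach_within P g n"
  shows "hit_prob P (greedy_policy P) g (goal_dist P g s) s = 1"
  using assms(2)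
proof (induction "goal_dist P g s" arbitrary: s n)
  case 0
  then show ?case
    using reach_within_goal_dist[OF "0.prems"] by simp
next
  case (Suc k)
  have dist: "goal_dist P g s = Suc k"
    using Suc.hyps(2) by simp
  define a where "a = (SOME a. next_state P g s a \<in> reach_within P g k)"
  have a_step: "next_state P g s a \<in> reach_within P g k"
    unfolding a_def by (rule someI_ex) (rule goal_dist_Suc_step(2)[OF Suc.prems dist])
  then have "goal_dist P g (next_state P g s a) = k"
    by (rule goal_dist_next_state[OF dist])
  then have "hit_prob P (greedy_policy P) g k (next_state P g s a) = 1"
    using Suc.hyps(1)[OF _ a_step] by simp
  moreover have "greedy_policy P s g = return_pmf a"
    unfolding greedy_policy_def a_def by (simp add: dist)
  ultimately show ?case
    using goal_dist_Suc_step(1)[OF Suc.prems dist]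
    by (simp del: hit_prob.simps
        add: dist hit_prob_Suc_deterministic[OF assms(1)] nn_integral_return_pmf)
qed

context
  fixes P :: "('s,'a) dynamics"
  assumes det: "deterministic_dynamics P"
begin

lemma value_fn_le_goal_dist:
  assumes "0 \<le> \<gamma>" and "\<gamma> \<le> 1"
  shows "value_fn P \<gamma> pol s g \<le> ennreal (\<gamma> ^ goal_dist P g s)"
  unfolding value_fn_def
  using discounted_sum_le_power[OF hit_prob_below_goal_dist[OF det] hit_prob_sum_le_1 assms] .

lemma value_fn_eq_goal_dist_iff:
  assumes "0 < \<gamma>" and "\<gamma> < 1"
  shows "value_fn P \<gamma> pol s g = ennreal (\<gamma> ^ goal_dist P g s)
    \<longleftrightarrow> hit_prob P pol g (goal_dist P g s) s = 1"
  unfolding value_fn_def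
  using discounted_sum_eq_power_iff[OF hit_prob_below_goal_dist[OF det] hit_prob_sum_le_1 assms] .

lemma time_step_metric_ge_goal_dist:
  "of_nat (goal_dist P g s) \<le> time_step_metric P pol s g"
  unfolding time_step_metric_def
  using expected_time_ge[OF hit_prob_below_goal_dist[OF det] hit_prob_sum_le_1] .

lemma time_step_metric_eq_goal_dist_iff:
  "time_step_metric P pol s g = of_nat (goal_dist P g s)
    \<longleftrightarrow> hit_prob P pol g (goal_dist P g s) s = 1"
  unfolding time_step_metric_def
  using expected_time_eq_iff[OF hit_prob_below_goal_dist[OF det] hit_prob_sum_le_1] .

lemma d_min_eq_goal_dist:
  assumes reachable: "s \<in> reach_within P g m"
  shows "d_min P s g = of_nat (goal_dist P g s)"
  unfolding d_min_def
proof (rule antisym)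
  have "time_step_metric P (greedy_policy P) s g = of_nat (goal_dist P g s)"
    using time_step_metric_eq_goal_dist_iff hit_prob_greedy_policy[OF det reachable] by blast
  then show "(INF pol. time_step_metric P pol s g) \<le> of_nat (goal_dist P g s)"
    by (metis INF_lower UNIV_I)
qed (rule INF_greatest, rule time_step_metric_ge_goal_dist)

lemma value_maximal_iff_time_step_minimal:
  assumes "0 < \<gamma>" and "\<gamma> < 1"
  shows "(\<forall>pol'. value_fn P \<gamma> pol' s g \<le> value_fn P \<gamma> pol s g)
    \<longleftrightarrow> time_step_metric P pol s g = d_min P s g"
proof (cases "\<exists>m. s \<in> reach_within P g m")
  case True
  then obtain m where reachable: "s \<in> reach_within P g m" ..
  have greedy_value: "value_fn P \<gamma> (greedy_policy P) s g = ennreal (\<gamma> ^ goal_dist P g s)"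
    using value_fn_eq_goal_dist_iff[OF assms] hit_prob_greedy_policy[OF det reachable] by blast
  have "(\<forall>pol'. value_fn P \<gamma> pol' s g \<le> value_fn P \<gamma> pol s g)
      \<longleftrightarrow> value_fn P \<gamma> pol s g = ennreal (\<gamma> ^ goal_dist P g s)"
    using value_fn_le_goal_dist[of \<gamma>] assms greedy_value by (metis order_antisym less_imp_le)
  then show ?thesis
    by (simp add: value_fn_eq_goal_dist_iff[OF assms] time_step_metric_eq_goal_dist_iff
        d_min_eq_goal_dist[OF reachable])
next
  case False
  then have "hit_prob P pol' g n s = 0" for pol' n
    using hit_prob_nonzero_imp_reach_within[OF det] by blast
  then show ?thesis
    by (simp add: value_fn_def time_step_metric_def d_min_def)
qed

end

theorem proposition2:
  fixes P :: "('s,'a) dynamics" and G :: "'s set" and \<gamma> :: real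
    and pol :: "('s,'a) policy"
  assumes "deterministic_dynamics P"
    and "0 < \<gamma>" and "\<gamma> < 1"
  shows "optimal_policy P \<gamma> G pol \<longleftrightarrow> min_time_policy P G pol"
  unfolding optimal_policy_def min_time_policy_def
  using value_maximal_iff_time_step_minimal[OF assms] by blast

end
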